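(* Let $\Gamma:=\mathrm{Cos}(G,H,A)$ be a vertex-transitive graph and let $B$ be a subset of $A$. If every $\varphi\in\mathrm{Aut}(\Gamma)_H$ fixes the set $\{Hx\mid x\in B\}$ setwise, then every $\varphi\in\mathrm{Aut}(\Gamma)_H$ fixes the set $\{Hx\mid x\in\langle B\rangle\}$ setwise.
   Context: $G$ is a finite group, $H\le G$, and $A\subseteq G$ is a union of $(H,H)$-double cosets with $A=A^{-1}$. The coset graph $\mathrm{Cos}(G,H,A)$ has vertex set the right cosets of $H$ in $G$, with $Hx$ adjacent to $Hy$ iff $yx^{-1}\in A$ (i.e. $Hyx^{-1}H\subseteq HAH$). $\mathrm{Aut}(\Gamma)_H$ denotes the stabilizer in $\mathrm{Aut}(\Gamma)$ of the vertex $H$. *)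

theory Defs
  imports "HOL-Algebra.Algebra"
begin

text \<open>Vertices of Cos(G,H,A): the right cosets H x of H in G.
  Adjacency: Hx ~ Hy iff y x^{-1} in A.\<close>

definition cos_adj :: "('a, 'b) monoid_scheme \<Rightarrow> 'a set \<Rightarrow> 'a set \<Rightarrow> 'a set \<Rightarrow> 'a set \<Rightarrow> bool" where
  "cos_adj G H A V1 V2 \<longleftrightarrow>
     (\<exists>x\<in>carrier G. \<exists>y\<in>carrier G. V1 = r_coset G H x \<and> V2 = r_coset G H y \<and> monoid.mult G y (m_inv G x) \<in> A)"

definition cos_aut :: "('a, 'b) monoid_scheme \<Rightarrow> 'a set \<Rightarrow> 'a set \<Rightarrow> ('a set \<Rightarrow> 'a set) set" where
  "cos_aut G H A = {\<phi>. bij_betw \<phi> (RCOSETS G H) (RCOSETS G H) \<and>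
     (\<forall>V1\<in>RCOSETS G H. \<forall>V2\<in>RCOSETS G H. cos_adj G H A V1 V2 \<longleftrightarrow> cos_adj G H A (\<phi> V1) (\<phi> V2))}"

definition cos_aut_stab :: "('a, 'b) monoid_scheme \<Rightarrow> 'a set \<Rightarrow> 'a set \<Rightarrow> ('a set \<Rightarrow> 'a set) set" where
  "cos_aut_stab G H A = {\<phi> \<in> cos_aut G H A. \<phi> H = H}"

definition cos_vertex_transitive :: "('a, 'b) monoid_scheme \<Rightarrow> 'a set \<Rightarrow> 'a set \<Rightarrow> bool" where
  "cos_vertex_transitive G H A \<longleftrightarrow>
     (\<forall>V1\<in>RCOSETS G H. \<forall>V2\<in>RCOSETS G H. \<exists>\<phi>\<in>cos_aut G H A. \<phi> V1 = V2)"

definition union_of_double_cosets :: "('a, 'b) monoid_scheme \<Rightarrow> 'a set \<Rightarrow> 'a set \<Rightarrow> bool" where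
  "union_of_double_cosets G H A \<longleftrightarrow> A \<subseteq> carrier G \<and>
     (\<forall>a\<in>A. \<forall>h1\<in>H. \<forall>h2\<in>H. monoid.mult G (monoid.mult G h1 a) h2 \<in> A)"

end

theory Submission
  imports Defs
begin

text \<open>Right translations \<open>V \<mapsto> V #> g\<close> are automorphisms of the coset graph. Hence if
  \<open>\<phi>\<close> fixes \<open>H\<close> and sends \<open>H #> x\<close> to \<open>H #> y\<close>, then \<open>V \<mapsto> \<phi> (V #> x) #> inv y\<close>
  again fixes \<open>H\<close>; evaluating it at \<open>H #> z\<close> shows that the elements \<open>x\<close> for which
  every such \<open>\<phi>\<close> sends \<open>H #> x\<close> to some \<open>H #> y\<close> with \<open>y \<in> \<langle>B\<rangle>\<close> form a submonoid.
  It contains \<open>B\<close>, and in a finite group every submonoid is a subgroup, so it contains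
  \<open>\<langle>B\<rangle>\<close>. Thus each \<open>\<phi>\<close> maps the finitely many cosets \<open>H #> x\<close>, \<open>x \<in> \<langle>B\<rangle>\<close>,
  injectively into themselves.\<close>

lemma (in group) submonoid_pow_closed:
  assumes "submonoid S G" "x \<in> S"
  shows "x [^] (n::nat) \<in> S"
proof (induction n)
  case 0
  then show ?case using submonoid.one_closed[OF assms(1)] by simp
next
  case (Suc n)
  then show ?case
    using assms submonoid.m_closed[OF assms(1)] submonoid.mem_carrier[OF assms(1)] by simp
qed

lemma (in group) finite_submonoid_imp_subgroup:
  assumes "finite (carrier G)" "submonoid S G"
  shows "subgroup S G"
proof (rule submonoid_subgroupI[OF assms(2)])
  fix x assume x: "x \<in> S"
  then have x_carrier: "x \<in> carrier G"
    using submonoid.mem_carrier[OF assms(2)] by blast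
  have "order G > 0"
    using assms(1) one_closed unfolding order_def by (auto simp: card_gt_0_iff)
  then have "x [^] (order G - 1) \<otimes> x = x [^] order G"
    by (metis Suc_diff_1 nat_pow_Suc)
  also have "\<dots> = \<one>"
    using x_carrier by (rule pow_order_eq_1)
  finally have "inv x = x [^] (order G - 1)"
    using x_carrier by (simp add: inv_equality)
  then show "inv x \<in> S"
    using submonoid_pow_closed[OF assms(2) x] by simp
qed

lemma (in group) cos_adj_r_coset_mult:
  assumes "subgroup H G" "cos_adj G H A V1 V2" "g \<in> carrier G"
  shows "cos_adj G H A (V1 #> g) (V2 #> g)"
proof -
  obtain x y where xy: "x \<in> carrier G" "y \<in> carrier G" "V1 = H #> x" "V2 = H #> y"
      "y \<otimes> inv x \<in> A"
    using assms(2) unfolding cos_adj_def by blast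
  have "(y \<otimes> g) \<otimes> inv (x \<otimes> g) = y \<otimes> inv x"
    using xy assms(3) by (simp add: inv_mult_group m_assoc flip: m_assoc[of g])
  moreover have "V1 #> g = H #> (x \<otimes> g)" "V2 #> g = H #> (y \<otimes> g)"
    using xy assms(3) subgroup.subset[OF assms(1)] by (simp_all add: coset_mult_assoc)
  ultimately show ?thesis
    unfolding cos_adj_def using xy assms(3) by (metis m_closed)
qed

lemma (in group) r_coset_mult_inv_cancel:
  assumes "subgroup H G" "V \<in> rcosets H" "g \<in> carrier G"
  shows "V #> g #> inv g = V"
  using assms subgroup.rcosets_carrier[OF assms(1) is_group]
  by (simp add: coset_mult_assoc)

lemma (in group) r_coset_mult_in_cos_aut:
  assumes "subgroup H G" "g \<in> carrier G"
  shows "(\<lambda>V. V #> g) \<in> cos_aut G H A"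
proof -
  have closed: "V #> k \<in> rcosets H" if "V \<in> rcosets H" "k \<in> carrier G" for V k
    using that subgroup.subset[OF assms(1)] unfolding RCOSETS_def
    by (auto simp add: coset_mult_assoc)
  have "bij_betw (\<lambda>V. V #> g) (rcosets H) (rcosets H)"
    by (rule bij_betw_byWitness[where f'="\<lambda>V. V #> inv g"])
      (use closed assms r_coset_mult_inv_cancel r_coset_mult_inv_cancel[of H _ "inv g"] in auto)
  moreover have "cos_adj G H A V1 V2 \<longleftrightarrow> cos_adj G H A (V1 #> g) (V2 #> g)"
    if "V1 \<in> rcosets H" "V2 \<in> rcosets H" for V1 V2
    using cos_adj_r_coset_mult[OF assms(1) _ assms(2)]
      cos_adj_r_coset_mult[OF assms(1), of A "V1 #> g" "V2 #> g" "inv g"]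
      r_coset_mult_inv_cancel[OF assms(1) _ assms(2)] that assms(2) by auto
  ultimately show ?thesis
    unfolding cos_aut_def by blast
qed

lemma cos_aut_closed:
  assumes "\<phi> \<in> cos_aut G H A" "V \<in> RCOSETS G H"
  shows "\<phi> V \<in> RCOSETS G H"
  using assms unfolding cos_aut_def by (blast dest: bij_betwE)

lemma cos_aut_comp:
  assumes "f \<in> cos_aut G H A" "g \<in> cos_aut G H A"
  shows "f \<circ> g \<in> cos_aut G H A"
proof -
  have "bij_betw (f \<circ> g) (RCOSETS G H) (RCOSETS G H)"
    using assms unfolding cos_aut_def by (blast intro: bij_betw_trans)
  moreover have "cos_adj G H A V1 V2 \<longleftrightarrow> cos_adj G H A ((f \<circ> g) V1) ((f \<circ> g) V2)"
    if "V1 \<in> RCOSETS G H" "V2 \<in> RCOSETS G H" for V1 V2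
    using assms that cos_aut_closed[OF assms(2) that(1)] cos_aut_closed[OF assms(2) that(2)]
    unfolding cos_aut_def by simp
  ultimately show ?thesis
    unfolding cos_aut_def by blast
qed

lemma (in group) cos_aut_stab_translate:
  assumes "subgroup H G" "\<phi> \<in> cos_aut_stab G H A"
    and "x \<in> carrier G" "y \<in> carrier G" "\<phi> (H #> x) = H #> y"
  shows "(\<lambda>V. V #> inv y) \<circ> \<phi> \<circ> (\<lambda>V. V #> x) \<in> cos_aut_stab G H A"
proof -
  have "(\<lambda>V. V #> inv y) \<circ> \<phi> \<circ> (\<lambda>V. V #> x) \<in> cos_aut G H A"
    using assms unfolding cos_aut_stab_def
    by (blast intro: cos_aut_comp r_coset_mult_in_cos_aut inv_closed)
  moreover have "H #> y #> inv y = H"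
    using assms(4) subgroup.subset[OF assms(1)] by (simp add: coset_mult_assoc)
  ultimately show ?thesis
    using assms(5) unfolding cos_aut_stab_def by simp
qed

lemma (in group) cos_aut_stab_image_mult:
  assumes "subgroup H G" "subgroup K G" "z \<in> carrier G" "x \<in> carrier G"
    and z_maps: "\<forall>\<phi>\<in>cos_aut_stab G H A. \<phi> (H #> z) \<in> {H #> k | k. k \<in> K}"
    and x_maps: "\<forall>\<phi>\<in>cos_aut_stab G H A. \<phi> (H #> x) \<in> {H #> k | k. k \<in> K}"
    and \<phi>: "\<phi> \<in> cos_aut_stab G H A"
  shows "\<phi> (H #> (z \<otimes> x)) \<in> {H #> k | k. k \<in> K}"
proof -
  have H_carrier: "H \<subseteq> carrier G"
    using assms(1) by (rule subgroup.subset)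
  obtain y where y: "y \<in> K" "\<phi> (H #> x) = H #> y"
    using x_maps \<phi> by blast
  have y_carrier: "y \<in> carrier G"
    using y(1) subgroup.mem_carrier[OF assms(2)] by blast
  define \<psi> where "\<psi> = (\<lambda>V. V #> inv y) \<circ> \<phi> \<circ> (\<lambda>V. V #> x)"
  have "\<psi> \<in> cos_aut_stab G H A"
    unfolding \<psi>_def using cos_aut_stab_translate[OF assms(1) \<phi> assms(4) y_carrier y(2)] .
  then obtain z' where z': "z' \<in> K" "\<psi> (H #> z) = H #> z'"
    using z_maps by blast
  have z'_carrier: "z' \<in> carrier G"
    using z'(1) subgroup.mem_carrier[OF assms(2)] by blast
  have "\<phi> (H #> (z \<otimes> x)) \<in> rcosets H"
    using \<phi> cos_aut_closed rcosetsI[OF H_carrier m_closed[OF assms(3,4)]]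
    unfolding cos_aut_stab_def by blast
  then have "\<phi> (H #> (z \<otimes> x)) = \<psi> (H #> z) #> y"
    unfolding \<psi>_def using H_carrier assms(3,4) y_carrier
    by (simp add: coset_mult_assoc subgroup.rcosets_carrier[OF assms(1) is_group])
  also have "\<dots> = H #> (z' \<otimes> y)"
    using z'(2) H_carrier y_carrier z'_carrier by (simp add: coset_mult_assoc)
  finally show ?thesis
    using subgroup.m_closed[OF assms(2) z'(1) y(1)] by blast
qed

lemma (in group) cos_aut_stab_maps_generate_cosets:
  assumes "finite (carrier G)" "subgroup H G" "B \<subseteq> carrier G"
    and B_cosets: "\<forall>\<phi>\<in>cos_aut_stab G H A. \<phi> ` {H #> b | b. b \<in> B} \<subseteq> {H #> b | b. b \<in> B}"
    and "\<phi> \<in> cos_aut_stab G H A" "x \<in> generate G B"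
  shows "\<phi> (H #> x) \<in> {H #> y | y. y \<in> generate G B}"
proof -
  define C where "C = {H #> y | y. y \<in> generate G B}"
  define S where "S = {x \<in> carrier G. \<forall>\<phi>\<in>cos_aut_stab G H A. \<phi> (H #> x) \<in> C}"
  have S_iff: "x \<in> S \<longleftrightarrow> x \<in> carrier G \<and> (\<forall>\<phi>\<in>cos_aut_stab G H A. \<phi> (H #> x) \<in> C)" for x
    unfolding S_def by (rule mem_Collect_eq)
  have "submonoid S G"
  proof
    show "S \<subseteq> carrier G"
      using S_iff by blast
    have "\<phi> (H #> \<one>) \<in> C" if "\<phi> \<in> cos_aut_stab G H A" for \<phi>
    proof -
      have "\<phi> (H #> \<one>) = H #> \<one>"
        using that subgroup.subset[OF assms(2)] unfolding cos_aut_stab_def by simp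
      then show ?thesis
        unfolding C_def using generate.one by blast
    qed
    then show "\<one> \<in> S"
      using S_iff by blast
  next
    fix z x assume "z \<in> S" "x \<in> S"
    then have z: "z \<in> carrier G" "\<forall>\<phi>\<in>cos_aut_stab G H A. \<phi> (H #> z) \<in> C"
      and x: "x \<in> carrier G" "\<forall>\<phi>\<in>cos_aut_stab G H A. \<phi> (H #> x) \<in> C"
      using S_iff by blast+
    have "\<phi> (H #> (z \<otimes> x)) \<in> C" if "\<phi> \<in> cos_aut_stab G H A" for \<phi>
      using cos_aut_stab_image_mult[OF assms(2) generate_is_subgroup[OF assms(3)] z(1) x(1)
          z(2)[unfolded C_def] x(2)[unfolded C_def] that]
      unfolding C_def .
    then show "z \<otimes> x \<in> S"
      using S_iff z(1) x(1) by blast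
  qed
  then have "subgroup S G"
    using assms(1) by (rule finite_submonoid_imp_subgroup[rotated])
  moreover have "B \<subseteq> S"
  proof
    fix b assume b: "b \<in> B"
    have "\<phi> (H #> b) \<in> C" if "\<phi> \<in> cos_aut_stab G H A" for \<phi>
    proof -
      have "H #> b \<in> {H #> b | b. b \<in> B}"
        using b by blast
      then have "\<phi> (H #> b) \<in> {H #> b | b. b \<in> B}"
        using B_cosets that by blast
      then obtain b' where "b' \<in> B" "\<phi> (H #> b) = H #> b'"
        by blast
      then show ?thesis
        unfolding C_def using generate.incl[of b' B G] by blast
    qed
    then show "b \<in> S"
      using S_iff b assms(3) by blast
  qed
  ultimately have "generate G B \<subseteq> S"
    by (rule generate_subgroup_incl[rotated])
  then show ?thesis
    using assms(5,6) S_iff unfolding C_def by blast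
qed

theorem lemma3p4:
  fixes G (structure) and H A B :: "'a set"
  assumes "group G" and "finite (carrier G)"
    and "subgroup H G"
    and "union_of_double_cosets G H A"
    and "(\<lambda>a. inv a) ` A = A"
    and "cos_vertex_transitive G H A"
    and "B \<subseteq> A"
    and "\<forall>\<phi>\<in>cos_aut_stab G H A. \<phi> ` {H #> x | x. x \<in> B} = {H #> x | x. x \<in> B}"
  shows "\<forall>\<phi>\<in>cos_aut_stab G H A.
           \<phi> ` {H #> x | x. x \<in> generate G B} = {H #> x | x. x \<in> generate G B}"
proof
  interpret group G by (rule assms(1))
  fix \<phi> assume \<phi>: "\<phi> \<in> cos_aut_stab G H A"
  let ?C = "{H #> x | x. x \<in> generate G B}"
  have B_carrier: "B \<subseteq> carrier G"
    using assms(4,7) unfolding union_of_double_cosets_def by blast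
  have C_rcosets: "?C \<subseteq> rcosets H"
    using generate_in_carrier[OF B_carrier] subgroup.subset[OF assms(3)] rcosetsI by blast
  have "\<phi> ` ?C \<subseteq> ?C"
    using cos_aut_stab_maps_generate_cosets[OF assms(2,3) B_carrier _ \<phi>] assms(8) by blast
  moreover have "inj_on \<phi> ?C"
  proof -
    have "inj_on \<phi> (rcosets H)"
      using \<phi> unfolding cos_aut_stab_def cos_aut_def bij_betw_def by blast
    then show ?thesis
      using C_rcosets by (rule inj_on_subset)
  qed
  moreover have "finite ?C"
  proof -
    have "finite (rcosets H)"
      using assms(2) unfolding RCOSETS_def by simp
    then show ?thesis
      using C_rcosets by (rule finite_subset[rotated])
  qed
  ultimately show "\<phi> ` ?C = ?C"
    by (rule endo_inj_surj[rotated])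
qed

end
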